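(* Let $C$ be a $d$-copula and let $C_1,\ldots,C_d$ be $2$-copulas whose tail dependence functions $\Lambda_{C_i}:=\Lambda(\cdot;C_i)$ exist and satisfy $$\lim_{s\searrow0}\int_0^\infty\Big|\partial_1C_i(st,sw)\,\mathbf{1}_{[0,1/s]}(t)-\partial_1\Lambda_{C_i}(t,w)\Big|\,dt=0$$ for all $w\in\mathbb{R}_+$ and all $i=1,\ldots,d$. Then for all $\mathbf{w}\in\mathbb{R}_+^d$, $$\phi_C(\Lambda_{C_1},\ldots,\Lambda_{C_d})(\mathbf{w})=\Lambda\big(\mathbf{w};\phi_C(C_1,\ldots,C_d)\big),$$ i.e. $\lim_{s\searrow0}\phi_C(C_1,\ldots,C_d)(s\mathbf{w})/s=\phi_C(\Lambda_{C_1},\ldots,\Lambda_{C_d})(\mathbf{w})$.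
   Context: A $d$-copula is a distribution function on $[0,1]^d$ with uniform margins. The tail dependence function of a $d$-copula $D$ is $\Lambda(\mathbf{w};D):=\lim_{s\searrow0}D(s\mathbf{w})/s$ for $\mathbf{w}\in\mathbb{R}_+^d$, $\mathbb{R}_+=[0,\infty)$, when the limit exists for all $\mathbf{w}$. For $2$-copulas $C_1,\ldots,C_d$ the generalized Markov product induced by $C$ is the $d$-copula $\phi_C(C_1,\ldots,C_d)(v_1,\ldots,v_d):=\int_0^1C(\partial_1C_1(t,v_1),\ldots,\partial_1C_d(t,v_d))\,dt$. For bivariate tail dependence functions $\Lambda_1,\ldots,\Lambda_d$, $\phi_C(\Lambda_1,\ldots,\Lambda_d)(w_1,\ldots,w_d):=\int_0^\infty C(\partial_1\Lambda_1(t,w_1),\ldots,\partial_1\Lambda_d(t,w_d))\,dt$. Partial derivatives are defined almost everywhere. *)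

theory Defs
  imports "HOL-Analysis.Analysis"
begin

text \<open>d-copulas, indexed by a finite type 'd (d = CARD('d)); points of [0,1]^d are
  functions 'd \<Rightarrow> real.\<close>

definition unit_cube :: "('d \<Rightarrow> real) set" where
  "unit_cube = {u. \<forall>i. 0 \<le> u i \<and> u i \<le> 1}"

definition copula :: "((('d::finite) \<Rightarrow> real) \<Rightarrow> real) \<Rightarrow> bool" where
  "copula C \<longleftrightarrow>
     (\<forall>u\<in>unit_cube. (\<exists>i. u i = 0) \<longrightarrow> C u = 0) \<and>
     (\<forall>u\<in>unit_cube. \<forall>i. (\<forall>j. j \<noteq> i \<longrightarrow> u j = 1) \<longrightarrow> C u = u i) \<and>
     (\<forall>a\<in>unit_cube. \<forall>b\<in>unit_cube. (\<forall>i. a i \<le> b i) \<longrightarrow>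
        0 \<le> (\<Sum>S\<in>Pow (UNIV::'d set). (-1) ^ card S * C (\<lambda>i. if i \<in> S then a i else b i)))"

definition copula2 :: "(real \<Rightarrow> real \<Rightarrow> real) \<Rightarrow> bool" where
  "copula2 C \<longleftrightarrow>
     (\<forall>u\<in>{0..1}. C u 0 = 0 \<and> C 0 u = 0 \<and> C u 1 = u \<and> C 1 u = u) \<and>
     (\<forall>u1\<in>{0..1}. \<forall>u2\<in>{0..1}. \<forall>v1\<in>{0..1}. \<forall>v2\<in>{0..1}. u1 \<le> u2 \<longrightarrow> v1 \<le> v2 \<longrightarrow>
        0 \<le> C u2 v2 - C u2 v1 - C u1 v2 + C u1 v1)"

text \<open>Partial derivative in the first argument; set to 0 where it does not exist
  (it exists almost everywhere in the relevant cases, so the convention is immaterial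
  inside integrals).\<close>
definition partial1 :: "(real \<Rightarrow> real \<Rightarrow> real) \<Rightarrow> real \<Rightarrow> real \<Rightarrow> real" where
  "partial1 f t v = (if (\<lambda>x. f x v) differentiable (at t) then deriv (\<lambda>x. f x v) t else 0)"

definition has_tdf2 :: "(real \<Rightarrow> real \<Rightarrow> real) \<Rightarrow> bool" where
  "has_tdf2 C \<longleftrightarrow> (\<forall>t\<ge>0. \<forall>w\<ge>0. \<exists>L. ((\<lambda>s. C (s * t) (s * w) / s) \<longlongrightarrow> L) (at_right 0))"

definition tdf2 :: "(real \<Rightarrow> real \<Rightarrow> real) \<Rightarrow> real \<Rightarrow> real \<Rightarrow> real" where
  "tdf2 C t w = Lim (at_right 0) (\<lambda>s. C (s * t) (s * w) / s)"

definition markov_prod ::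
  "(('d::finite \<Rightarrow> real) \<Rightarrow> real) \<Rightarrow> ('d \<Rightarrow> real \<Rightarrow> real \<Rightarrow> real) \<Rightarrow> ('d \<Rightarrow> real) \<Rightarrow> real" where
  "markov_prod C Cs v = (LBINT t:{0..1}. C (\<lambda>i. partial1 (Cs i) t (v i)))"

definition markov_prod_tdf ::
  "(('d::finite \<Rightarrow> real) \<Rightarrow> real) \<Rightarrow> ('d \<Rightarrow> real \<Rightarrow> real \<Rightarrow> real) \<Rightarrow> ('d \<Rightarrow> real) \<Rightarrow> real" where
  "markov_prod_tdf C Ls w = (LBINT t:{0..}. C (\<lambda>i. partial1 (Ls i) t (w i)))"

end

theory Submission
  imports Defs
begin

(* Substituting t = s t' gives markov_prod C Cs (s w) / s as the integral over [0, 1/s] of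
   C applied to the rescaled partial derivatives of the C_i.  A d-copula is 1-Lipschitz for the
   l1-norm on the unit cube and satisfies |C u| <= sum u, so its distance to the integral over
   [0, oo) of C applied to the partial derivatives of the tail dependence functions is at most
   the sum of the L1 distances in the hypothesis, which tend to 0.  Both integrals make sense
   because the partial derivatives of monotone 1-Lipschitz functions are Borel measurable with
   values in [0, 1]; the integrability on [0, oo) is again inherited from the hypothesis. *)

section \<open>Copulas are 1-Lipschitz\<close>

lemma unit_cube_upd: "u \<in> unit_cube \<Longrightarrow> 0 \<le> x \<Longrightarrow> x \<le> 1 \<Longrightarrow> u(i := x) \<in> unit_cube"
  by (auto simp: unit_cube_def)

lemma copula_grounded: "copula C \<Longrightarrow> u \<in> unit_cube \<Longrightarrow> u i = 0 \<Longrightarrow> C u = 0"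
  unfolding copula_def by blast

lemma copula_margin: "copula C \<Longrightarrow> u \<in> unit_cube \<Longrightarrow> (\<And>j. j \<noteq> i \<Longrightarrow> u j = 1) \<Longrightarrow> C u = u i"
  unfolding copula_def by blast

lemma copula_box_nonneg_Pow:
  fixes C :: "('d::finite \<Rightarrow> real) \<Rightarrow> real"
  assumes C: "copula C" and a: "a \<in> unit_cube" and b: "b \<in> unit_cube" and ab: "\<And>i. a i \<le> b i"
    and T: "\<And>k. k \<notin> T \<Longrightarrow> a k = 0"
  shows "0 \<le> (\<Sum>S\<in>Pow T. (-1) ^ card S * C (\<lambda>i. if i \<in> S then a i else b i))"
proof -
  have "0 \<le> (\<Sum>S\<in>Pow UNIV. (-1) ^ card S * C (\<lambda>i. if i \<in> S then a i else b i))"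
    using C a b ab unfolding copula_def by blast
  also have "\<dots> = (\<Sum>S\<in>Pow T. (-1) ^ card S * C (\<lambda>i. if i \<in> S then a i else b i))"
  proof (rule sum.mono_neutral_right)
    show "\<forall>S\<in>Pow UNIV - Pow T. (-1) ^ card S * C (\<lambda>i. if i \<in> S then a i else b i) = 0"
    proof
      fix S assume "S \<in> Pow UNIV - Pow T"
      then obtain k where "k \<in> S" "k \<notin> T" by auto
      moreover have "(\<lambda>i. if i \<in> S then a i else b i) \<in> unit_cube"
        using a b by (auto simp: unit_cube_def)
      ultimately show "(-1) ^ card S * C (\<lambda>i. if i \<in> S then a i else b i) = 0"
        using copula_grounded[OF C, of _ k] T by simp
    qed
  qed auto
  finally show ?thesis .
qed

lemma copula_mono_coord:
  fixes C :: "('d::finite \<Rightarrow> real) \<Rightarrow> real"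
  assumes C: "copula C" and u: "u \<in> unit_cube" and x: "0 \<le> x" "x \<le> u i"
  shows "C (u(i := x)) \<le> C u"
proof -
  let ?a = "\<lambda>k. if k = i then x else 0"
  have "u i \<le> 1" using u by (simp add: unit_cube_def)
  then have "x \<le> 1" using x by linarith
  then have "0 \<le> (\<Sum>S\<in>Pow {i}. (-1) ^ card S * C (\<lambda>k. if k \<in> S then ?a k else u k))"
    using u x by (intro copula_box_nonneg_Pow[OF C _ u]) (auto simp: unit_cube_def)
  moreover have "Pow {i} = {{}, {i}}" by auto
  moreover have "(\<lambda>k. if k \<in> {i} then ?a k else u k) = u(i := x)" by auto
  ultimately show ?thesis by simp
qed

lemma copula_2_increasing:
  fixes C :: "('d::finite \<Rightarrow> real) \<Rightarrow> real"
  assumes C: "copula C" and u: "u \<in> unit_cube" and ij: "i \<noteq> j"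
    and x: "0 \<le> x" "x \<le> u i" and y: "u j \<le> y" "y \<le> 1"
  shows "C u - C (u(i := x)) \<le> C (u(j := y)) - C (u(i := x, j := y))"
proof -
  let ?a = "\<lambda>k. if k = i then x else if k = j then u j else 0"
  let ?box = "\<lambda>S k. if k \<in> S then ?a k else (u(j := y)) k"
  have "0 \<le> u j" "u i \<le> 1" using u by (auto simp: unit_cube_def)
  then have "0 \<le> y" "x \<le> 1" using x y by linarith+
  then have "0 \<le> (\<Sum>S\<in>Pow {i, j}. (-1) ^ card S * C (?box S))"
    using u x y by (intro copula_box_nonneg_Pow[OF C _ unit_cube_upd[OF u]]) (auto simp: unit_cube_def)
  moreover have "Pow {i, j} = {{}, {i}, {j}, {i, j}}" by (auto simp: Pow_insert)
  moreover have "?box {} = u(j := y)" "?box {i} = u(i := x, j := y)" "?box {j} = u"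
    "?box {i, j} = u(i := x)"
    using ij by auto
  ultimately show ?thesis using ij by (simp add: insert_commute)
qed

text \<open>Raising the other coordinates to 1 one at a time can only increase the increment in
  coordinate i (2-increasingness); once they all equal 1 the increment is read off a margin.\<close>
lemma copula_increment_le:
  fixes C :: "('d::finite \<Rightarrow> real) \<Rightarrow> real"
  assumes C: "copula C" and u: "u \<in> unit_cube" and x: "0 \<le> x" "x \<le> u i"
  shows "C u - C (u(i := x)) \<le> u i - x"
proof -
  define q where "q S = (\<lambda>k. if k \<in> S then 1 else u k)" for S :: "'d set"
  have q_cube: "q S \<in> unit_cube" for S
    using u unfolding q_def unit_cube_def by simp
  have raise: "C u - C (u(i := x)) \<le> C (q S) - C ((q S)(i := x))" if "S \<subseteq> - {i}" for S
    using that
  proof (induction S rule: infinite_finite_induct)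
    case (insert j S)
    then have ij: "i \<noteq> j" and S: "S \<subseteq> - {i}" by auto
    have "x \<le> q S i" using S x unfolding q_def by auto
    moreover have "q S j \<le> 1" using q_cube[of S] unfolding unit_cube_def by blast
    ultimately have "C (q S) - C ((q S)(i := x)) \<le> C ((q S)(j := 1)) - C ((q S)(i := x, j := 1))"
      by (intro copula_2_increasing[OF C q_cube ij x(1)]) auto
    moreover have "(q S)(j := 1) = q (insert j S)" "(q S)(i := x, j := 1) = (q (insert j S))(i := x)"
      using ij by (auto simp: q_def)
    ultimately have "C (q S) - C ((q S)(i := x)) \<le> C (q (insert j S)) - C ((q (insert j S))(i := x))"
      by (simp only:)
    with insert.IH[OF S] show ?case by linarith
  qed (auto simp: q_def)
  have "u i \<le> 1" using u by (simp add: unit_cube_def)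
  then have "x \<le> 1" using x by linarith
  have "C (q (- {i})) = q (- {i}) i"
    by (rule copula_margin[OF C q_cube]) (simp add: q_def)
  moreover have "C ((q (- {i}))(i := x)) = ((q (- {i}))(i := x)) i"
    by (rule copula_margin[OF C unit_cube_upd[OF q_cube x(1) \<open>x \<le> 1\<close>]]) (simp add: q_def)
  ultimately have "C (q (- {i})) = u i" "C ((q (- {i}))(i := x)) = x"
    by (simp_all add: q_def)
  then show ?thesis using raise[of "- {i}"] by simp
qed

lemma copula_lipschitz_coord:
  fixes C :: "('d::finite \<Rightarrow> real) \<Rightarrow> real"
  assumes C: "copula C" and u: "u \<in> unit_cube" and x: "0 \<le> x" "x \<le> 1"
  shows "\<bar>C (u(i := x)) - C u\<bar> \<le> \<bar>x - u i\<bar>"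
proof (cases "x \<le> u i")
  case True
  then show ?thesis
    using copula_increment_le[OF C u x(1) True] copula_mono_coord[OF C u x(1) True] by simp
next
  case False
  have v: "u(i := x) \<in> unit_cube" by (rule unit_cube_upd[OF u x])
  have "0 \<le> u i" "u i \<le> x" using u False by (auto simp: unit_cube_def)
  then show ?thesis
    using copula_increment_le[OF C v, of "u i" i] copula_mono_coord[OF C v, of "u i" i] by simp
qed

lemma copula_lipschitz:
  fixes C :: "('d::finite \<Rightarrow> real) \<Rightarrow> real"
  assumes C: "copula C" and a: "a \<in> unit_cube" and b: "b \<in> unit_cube"
  shows "\<bar>C a - C b\<bar> \<le> (\<Sum>i\<in>UNIV. \<bar>a i - b i\<bar>)"
proof -
  define p where "p S = (\<lambda>k. if k \<in> S then a k else b k)" for S :: "'d set"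
  have p_cube: "p S \<in> unit_cube" for S
    using a b by (auto simp: p_def unit_cube_def)
  have "\<bar>C (p S) - C b\<bar> \<le> (\<Sum>i\<in>S. \<bar>a i - b i\<bar>)" for S
  proof (induction S rule: infinite_finite_induct)
    case (insert j S)
    have "p (insert j S) = (p S)(j := a j)" "p S j = b j"
      using insert by (auto simp: p_def)
    moreover have "0 \<le> a j" "a j \<le> 1" using a by (auto simp: unit_cube_def)
    ultimately have "\<bar>C (p (insert j S)) - C (p S)\<bar> \<le> \<bar>a j - b j\<bar>"
      using copula_lipschitz_coord[OF C p_cube, of "a j" S j] by simp
    then show ?case using insert by simp
  qed (auto simp: p_def)
  from this[of UNIV] show ?thesis by (simp add: p_def)
qed

lemma copula_abs_le_sum:
  fixes C :: "('d::finite \<Rightarrow> real) \<Rightarrow> real"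
  assumes C: "copula C" and u: "u \<in> unit_cube"
  shows "\<bar>C u\<bar> \<le> (\<Sum>i\<in>UNIV. u i)"
proof -
  have "C (\<lambda>_. 0) = 0" using C unfolding copula_def unit_cube_def by auto
  moreover have "(\<lambda>_. 0) \<in> unit_cube" by (simp add: unit_cube_def)
  moreover have "(\<Sum>i\<in>UNIV. \<bar>u i - 0\<bar>) = (\<Sum>i\<in>UNIV. u i)"
    using u by (simp add: unit_cube_def)
  ultimately show ?thesis using copula_lipschitz[OF C u, of "\<lambda>_. 0"] by simp
qed

text \<open>The 2-copulas (and their tail dependence functions) are only constrained on the unit
  square (the positive quadrant), so their partial derivatives are controlled only for first
  argument in (0, 1) (resp. (0, oo)).  Composing with clamp01 (resp. max 0) yields
  monotone 1-Lipschitz functions on all of R with the same partial derivative there.\<close>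

definition clamp01 :: "real \<Rightarrow> real" where
  "clamp01 x = max 0 (min 1 x)"

lemma clamp01_mem: "0 \<le> clamp01 x" "clamp01 x \<le> 1"
  by (auto simp: clamp01_def)

lemma clamp01_id: "0 \<le> x \<Longrightarrow> x \<le> 1 \<Longrightarrow> clamp01 x = x"
  by (auto simp: clamp01_def)

lemma clamp01_increment: "x \<le> y \<Longrightarrow> clamp01 x \<le> clamp01 y \<and> clamp01 y - clamp01 x \<le> y - x"
  by (auto simp: clamp01_def)

lemma continuous_on_copula_clamp01:
  fixes C :: "('d::finite \<Rightarrow> real) \<Rightarrow> real"
  assumes C: "copula C"
  shows "continuous_on UNIV (\<lambda>u. C (\<lambda>i. clamp01 (u i)))"
proof (intro continuous_at_imp_continuous_on ballI)
  fix x :: "'d \<Rightarrow> real"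
  have cube: "(\<lambda>i. clamp01 (u i)) \<in> unit_cube" for u :: "'d \<Rightarrow> real"
    by (simp add: unit_cube_def clamp01_mem)
  have bound: "norm (C (\<lambda>i. clamp01 (y i)) - C (\<lambda>i. clamp01 (x i))) \<le> (\<Sum>i\<in>UNIV. \<bar>y i - x i\<bar>)"
    for y
  proof -
    have "\<bar>C (\<lambda>i. clamp01 (y i)) - C (\<lambda>i. clamp01 (x i))\<bar> \<le> (\<Sum>i\<in>UNIV. \<bar>clamp01 (y i) - clamp01 (x i)\<bar>)"
      by (rule copula_lipschitz[OF C cube cube])
    also have "\<dots> \<le> (\<Sum>i\<in>UNIV. \<bar>y i - x i\<bar>)"
    proof (rule sum_mono)
      show "\<bar>clamp01 (y i) - clamp01 (x i)\<bar> \<le> \<bar>y i - x i\<bar>" for i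
        using clamp01_increment[of "y i" "x i"] clamp01_increment[of "x i" "y i"] by linarith
    qed
    finally show ?thesis by simp
  qed
  have "continuous_on UNIV (\<lambda>y::'d \<Rightarrow> real. \<Sum>i\<in>UNIV. \<bar>y i - x i\<bar>)"
    by (intro continuous_intros continuous_on_product_coordinates)
  then have "isCont (\<lambda>y::'d \<Rightarrow> real. \<Sum>i\<in>UNIV. \<bar>y i - x i\<bar>) x"
    by (simp add: continuous_on_eq_continuous_at)
  then have "((\<lambda>y. \<Sum>i\<in>UNIV. \<bar>y i - x i\<bar>) \<longlongrightarrow> 0) (at x)"
    by (simp add: isCont_def)
  then have "((\<lambda>y. C (\<lambda>i. clamp01 (y i)) - C (\<lambda>i. clamp01 (x i))) \<longlongrightarrow> 0) (at x)"
    by (rule Lim_null_comparison[OF always_eventually[OF allI[OF bound]]])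
  then show "isCont (\<lambda>u. C (\<lambda>i. clamp01 (u i))) x"
    by (simp add: isCont_def LIM_zero_iff)
qed

lemma borel_measurable_copula_comp:
  fixes C :: "('d::finite \<Rightarrow> real) \<Rightarrow> real"
  assumes C: "copula C" and a: "\<And>i. a i \<in> borel_measurable M"
    and a01: "\<And>i x. 0 \<le> a i x \<and> a i x \<le> 1"
  shows "(\<lambda>x. C (\<lambda>i. a i x)) \<in> borel_measurable M"
proof -
  have "(\<lambda>x. \<lambda>i. a i x) \<in> borel_measurable M"
    by (rule measurable_coordinatewise_then_product) (rule a)
  then have "(\<lambda>x. C (\<lambda>i. clamp01 (a i x))) \<in> borel_measurable M"
    by (rule borel_measurable_continuous_on[OF continuous_on_copula_clamp01[OF C]])
  then show ?thesis
    using a01 by (simp add: clamp01_id)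
qed

section \<open>Monotone 1-Lipschitz sections of 2-copulas and tail dependence functions\<close>

lemma copula2_increment:
  assumes D: "copula2 D" and v: "0 \<le> v" "v \<le> 1" and xy: "0 \<le> x" "x \<le> y" "y \<le> 1"
  shows "D x v \<le> D y v" "D y v - D x v \<le> y - x"
proof -
  have "D x 0 = 0" "D x 1 = x" "D y 0 = 0" "D y 1 = y"
    using D xy unfolding copula2_def by auto
  moreover have "\<forall>u1\<in>{0..1}. \<forall>u2\<in>{0..1}. \<forall>v1\<in>{0..1}. \<forall>v2\<in>{0..1}.
      u1 \<le> u2 \<longrightarrow> v1 \<le> v2 \<longrightarrow> 0 \<le> D u2 v2 - D u2 v1 - D u1 v2 + D u1 v1"
    using D unfolding copula2_def by blast
  note rect = this[rule_format]
  have "0 \<le> D y v - D y 0 - D x v + D x 0" "0 \<le> D y 1 - D y v - D x 1 + D x v"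
    using v xy by (intro rect; simp)+
  ultimately show "D x v \<le> D y v" "D y v - D x v \<le> y - x" by linarith+
qed

lemma mono_lipschitz_of_increment:
  fixes g :: "real \<Rightarrow> real"
  assumes "\<And>x y. x \<le> y \<Longrightarrow> g x \<le> g y \<and> g y - g x \<le> y - x"
  shows "mono g" "1-lipschitz_on UNIV g"
proof -
  show "mono g" using assms by (simp add: mono_def)
  show "1-lipschitz_on UNIV g"
  proof (rule lipschitz_onI)
    show "dist (g x) (g y) \<le> 1 * dist x y" for x y
      using assms[of x y] assms[of y x] by (cases "x \<le> y") (auto simp: dist_real_def)
  qed simp
qed

lemma copula2_clamp01_mono_lipschitz:
  assumes "copula2 D" "0 \<le> v" "v \<le> 1"
  shows "mono (\<lambda>x. D (clamp01 x) v)" "1-lipschitz_on UNIV (\<lambda>x. D (clamp01 x) v)"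
proof -
  have "D (clamp01 x) v \<le> D (clamp01 y) v \<and> D (clamp01 y) v - D (clamp01 x) v \<le> y - x"
    if "x \<le> y" for x y
  proof -
    have "clamp01 x \<le> clamp01 y" "clamp01 y - clamp01 x \<le> y - x"
      using clamp01_increment[OF that] by auto
    then show ?thesis
      using copula2_increment[OF assms clamp01_mem(1) _ clamp01_mem(2)] by fastforce
  qed
  then show "mono (\<lambda>x. D (clamp01 x) v)" "1-lipschitz_on UNIV (\<lambda>x. D (clamp01 x) v)"
    by (auto intro: mono_lipschitz_of_increment)
qed

lemma eventually_at_right_0_mult_le_1: "\<forall>\<^sub>F s in at_right 0. s * (c::real) \<le> 1"
proof -
  have "((\<lambda>s. s * c) \<longlongrightarrow> 0) (at_right 0)"
    by (auto intro!: tendsto_eq_intros)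
  then have "\<forall>\<^sub>F s in at_right 0. s * c < 1"
    by (rule order_tendstoD(2)) simp
  then show ?thesis
    by eventually_elim simp
qed

lemma tendsto_tdf2:
  assumes "has_tdf2 D" "0 \<le> t" "0 \<le> w"
  shows "((\<lambda>s. D (s * t) (s * w) / s) \<longlongrightarrow> tdf2 D t w) (at_right 0)"
proof -
  obtain L where L: "((\<lambda>s. D (s * t) (s * w) / s) \<longlongrightarrow> L) (at_right 0)"
    using assms unfolding has_tdf2_def by blast
  then show ?thesis
    unfolding tdf2_def using tendsto_Lim[OF trivial_limit_at_right_real L] by simp
qed

lemma tdf2_increment:
  assumes D: "copula2 D" "has_tdf2 D" and w: "0 \<le> w" and t: "0 \<le> t1" "t1 \<le> t2"
  shows "tdf2 D t1 w \<le> tdf2 D t2 w \<and> tdf2 D t2 w - tdf2 D t1 w \<le> t2 - t1"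
proof -
  have scaled: "D (s * t1) (s * w) / s \<le> D (s * t2) (s * w) / s \<and>
      D (s * t2) (s * w) / s - D (s * t1) (s * w) / s \<le> t2 - t1"
    if s: "0 < s" "s * t2 \<le> 1" "s * w \<le> 1" for s
  proof -
    have "0 \<le> s * t1" "s * t1 \<le> s * t2" "0 \<le> s * w"
      using s t w by (simp_all add: mult_left_mono)
    note inc = copula2_increment[OF D(1) this(3) s(3) this(1,2) s(2)]
    have "D (s * t2) (s * w) / s - D (s * t1) (s * w) / s = (D (s * t2) (s * w) - D (s * t1) (s * w)) / s"
      by (rule diff_divide_distrib[symmetric])
    also have "\<dots> \<le> (s * t2 - s * t1) / s"
      using inc(2) s by (intro divide_right_mono) auto
    also have "\<dots> = t2 - t1"
      using s by (simp add: right_diff_distrib[symmetric])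
    finally show ?thesis
      using inc(1) s by (auto intro: divide_right_mono)
  qed
  have ev: "\<forall>\<^sub>F s in at_right 0. D (s * t1) (s * w) / s \<le> D (s * t2) (s * w) / s \<and>
      D (s * t2) (s * w) / s - D (s * t1) (s * w) / s \<le> t2 - t1"
    using eventually_at_right_less[of 0] eventually_at_right_0_mult_le_1[of t2]
      eventually_at_right_0_mult_le_1[of w]
    by eventually_elim (rule scaled)
  have lim: "((\<lambda>s. D (s * t1) (s * w) / s) \<longlongrightarrow> tdf2 D t1 w) (at_right 0)"
    "((\<lambda>s. D (s * t2) (s * w) / s) \<longlongrightarrow> tdf2 D t2 w) (at_right 0)"
    using t by (auto intro: tendsto_tdf2[OF D(2) _ w])
  show ?thesis
  proof
    show "tdf2 D t1 w \<le> tdf2 D t2 w"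
      using ev by (intro tendsto_le[OF _ lim(2) lim(1)]) (auto elim: eventually_mono)
    show "tdf2 D t2 w - tdf2 D t1 w \<le> t2 - t1"
      using ev by (intro tendsto_le[OF _ tendsto_const tendsto_diff[OF lim(2) lim(1)]])
        (auto elim: eventually_mono)
  qed
qed

lemma tdf2_max0_mono_lipschitz:
  assumes "copula2 D" "has_tdf2 D" "0 \<le> w"
  shows "mono (\<lambda>x. tdf2 D (max 0 x) w)" "1-lipschitz_on UNIV (\<lambda>x. tdf2 D (max 0 x) w)"
proof -
  have "tdf2 D (max 0 x) w \<le> tdf2 D (max 0 y) w \<and> tdf2 D (max 0 y) w - tdf2 D (max 0 x) w \<le> y - x"
    if "x \<le> y" for x y
  proof -
    have "max 0 x \<le> max 0 y" "max 0 y - max 0 x \<le> y - x"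
      using that by auto
    then show ?thesis
      using tdf2_increment[OF assms max.cobounded1, of x "max 0 y"] by auto
  qed
  then show "mono (\<lambda>x. tdf2 D (max 0 x) w)" "1-lipschitz_on UNIV (\<lambda>x. tdf2 D (max 0 x) w)"
    by (auto intro: mono_lipschitz_of_increment)
qed

section \<open>Partial derivatives of monotone 1-Lipschitz functions\<close>

lemma partial1_bounds:
  assumes mono: "mono (\<lambda>x. f x v)" and lip: "1-lipschitz_on UNIV (\<lambda>x. f x v)"
  shows "0 \<le> partial1 f t v \<and> partial1 f t v \<le> 1"
proof (cases "(\<lambda>x. f x v) differentiable (at t)")
  case True
  define q where "q h = (f (t + h) v - f t v) / h" for h
  have q_bounds: "0 \<le> q h \<and> q h \<le> 1" if "h \<noteq> 0" for h
  proof -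
    have lip_h: "\<bar>f (t + h) v - f t v\<bar> \<le> \<bar>h\<bar>"
      using lipschitz_onD[OF lip, of "t + h" t] by (simp add: dist_real_def)
    show ?thesis
    proof (cases "0 < h")
      case True
      then have "f t v \<le> f (t + h) v" using monoD[OF mono, of t "t + h"] by simp
      then show ?thesis
        using lip_h True by (simp add: q_def zero_le_divide_iff pos_divide_le_eq)
    next
      case False
      then have "h < 0" using that by simp
      then have "f (t + h) v \<le> f t v" using monoD[OF mono, of "t + h" t] by simp
      then show ?thesis
        using lip_h \<open>h < 0\<close> by (simp add: q_def zero_le_divide_iff neg_divide_le_eq)
    qed
  qed
  have "(q \<longlongrightarrow> deriv (\<lambda>x. f x v) t) (at 0)"
    using True unfolding q_def by (simp add: DERIV_deriv_iff_real_differentiable[symmetric] DERIV_def)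
  moreover have "\<forall>\<^sub>F h in at 0. 0 \<le> q h \<and> q h \<le> 1"
    using q_bounds by (auto simp: eventually_at_filter)
  ultimately have "0 \<le> deriv (\<lambda>x. f x v) t" "deriv (\<lambda>x. f x v) t \<le> 1"
    by (auto intro: tendsto_lowerbound tendsto_upperbound elim: eventually_mono)
  then show ?thesis
    using True by (simp add: partial1_def)
qed (simp add: partial1_def)

lemma partial1_cong_nhds:
  assumes "\<forall>\<^sub>F x in nhds t. f x v = g x v"
  shows "partial1 f t v = partial1 g t v"
proof -
  have "((\<lambda>x. f x v) has_field_derivative D) (at t) \<longleftrightarrow> ((\<lambda>x. g x v) has_field_derivative D) (at t)"
    for D
    by (rule has_field_derivative_cong_ev) (use assms in auto)
  then show ?thesis
    using deriv_cong_ev[OF assms refl] by (simp add: partial1_def real_differentiable_def)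
qed

lemma cauchy_filter_filtermap_at_0_iff:
  fixes q :: "real \<Rightarrow> real"
  shows "cauchy_filter (filtermap q (at 0)) \<longleftrightarrow>
    (\<forall>m::nat. \<exists>n::nat. \<forall>h k. h \<noteq> 0 \<and> \<bar>h\<bar> < inverse (Suc n) \<and> k \<noteq> 0 \<and> \<bar>k\<bar> < inverse (Suc n) \<longrightarrow>
       \<bar>q h - q k\<bar> \<le> inverse (Suc m))"
  unfolding cauchy_filter_metric_filtermap
proof (intro iffI allI impI)
  fix m :: nat
  assume "\<forall>e>0. \<exists>P. eventually P (at 0) \<and> (\<forall>h k. P h \<and> P k \<longrightarrow> dist (q h) (q k) < e)"
  then obtain P where P: "eventually P (at 0)"
    and PQ: "\<And>h k. P h \<Longrightarrow> P k \<Longrightarrow> \<bar>q h - q k\<bar> < inverse (Suc m)"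
    by (metis dist_real_def inverse_positive_iff_positive of_nat_0_less_iff zero_less_Suc)
  obtain d where d: "0 < d" "\<And>h. h \<noteq> 0 \<Longrightarrow> \<bar>h\<bar> < d \<Longrightarrow> P h"
    using P unfolding eventually_at by (auto simp: dist_real_def)
  obtain n where "inverse (real (Suc n)) < d"
    using reals_Archimedean[OF d(1)] by blast
  then show "\<exists>n. \<forall>h k. h \<noteq> 0 \<and> \<bar>h\<bar> < inverse (Suc n) \<and> k \<noteq> 0 \<and> \<bar>k\<bar> < inverse (Suc n) \<longrightarrow>
      \<bar>q h - q k\<bar> \<le> inverse (Suc m)"
    using d(2) PQ by (intro exI[of _ n]) (smt (verit))
next
  fix e :: real
  assume R: "\<forall>m. \<exists>n. \<forall>h k. h \<noteq> 0 \<and> \<bar>h\<bar> < inverse (Suc n) \<and> k \<noteq> 0 \<and> \<bar>k\<bar> < inverse (Suc n) \<longrightarrow>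
      \<bar>q h - q k\<bar> \<le> inverse (Suc m)"
    and "0 < e"
  then obtain m where m: "inverse (real (Suc m)) < e"
    using reals_Archimedean by blast
  obtain n where n: "\<And>h k. h \<noteq> 0 \<and> \<bar>h\<bar> < inverse (Suc n) \<and> k \<noteq> 0 \<and> \<bar>k\<bar> < inverse (Suc n) \<Longrightarrow>
      \<bar>q h - q k\<bar> \<le> inverse (Suc m)"
    using R by blast
  have "eventually (\<lambda>h. h \<noteq> 0 \<and> \<bar>h\<bar> < inverse (Suc n)) (at 0)"
    unfolding eventually_at by (intro exI[of _ "inverse (Suc n)"]) (auto simp: dist_real_def)
  then show "\<exists>P. eventually P (at 0) \<and> (\<forall>h k. P h \<and> P k \<longrightarrow> dist (q h) (q k) < e)"
    using n m by (intro exI[of _ "\<lambda>h. h \<noteq> 0 \<and> \<bar>h\<bar> < inverse (Suc n)"]) (fastforce simp: dist_real_def)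
qed

lemma real_differentiable_at_iff_Cauchy:
  fixes g :: "real \<Rightarrow> real"
  shows "g differentiable (at t) \<longleftrightarrow>
    (\<forall>m::nat. \<exists>n::nat. \<forall>h k. h \<noteq> 0 \<and> \<bar>h\<bar> < inverse (Suc n) \<and> k \<noteq> 0 \<and> \<bar>k\<bar> < inverse (Suc n) \<longrightarrow>
       \<bar>(g (t + h) - g t) / h - (g (t + k) - g t) / k\<bar> \<le> inverse (Suc m))"
proof -
  let ?q = "\<lambda>h. (g (t + h) - g t) / h"
  have "g differentiable (at t) \<longleftrightarrow> convergent_filter (filtermap ?q (at 0))"
    by (simp add: real_differentiable_def DERIV_def filterlim_def convergent_filter_iff)
  also have "\<dots> \<longleftrightarrow> cauchy_filter (filtermap ?q (at 0))"
    by (rule convergent_filter_iff_cauchy)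
  finally show ?thesis
    unfolding cauchy_filter_filtermap_at_0_iff .
qed

lemma borel_measurable_partial1:
  assumes cont: "continuous_on UNIV (\<lambda>x. f x v)"
  shows "(\<lambda>t. partial1 f t v) \<in> borel_measurable borel"
proof -
  define q where "q t h = (f (t + h) v - f t v) / h" for t h
  define E where "E m n = {t. \<forall>h k. h \<noteq> 0 \<and> \<bar>h\<bar> < inverse (Suc n) \<and> k \<noteq> 0 \<and> \<bar>k\<bar> < inverse (Suc n)
      \<longrightarrow> \<bar>q t h - q t k\<bar> \<le> inverse (Suc m)}" for m n :: nat
  have cont_q: "continuous_on UNIV (\<lambda>t. q t h)" for h
    unfolding q_def divide_inverse
    by (intro continuous_intros continuous_on_compose2[OF cont]) auto
  have "closed (E m n)" for m n
  proof -
    have closed_guarded: "closed {t. P \<longrightarrow> \<bar>q t h - q t k\<bar> \<le> inverse (Suc m)}" for P h k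
      by (cases P) (auto intro!: closed_Collect_le continuous_intros cont_q)
    have "E m n = (\<Inter>h. \<Inter>k. {t. (h \<noteq> 0 \<and> \<bar>h\<bar> < inverse (Suc n) \<and> k \<noteq> 0 \<and> \<bar>k\<bar> < inverse (Suc n))
        \<longrightarrow> \<bar>q t h - q t k\<bar> \<le> inverse (Suc m)})"
      unfolding E_def by blast
    then show ?thesis
      by (simp only:) (intro closed_INT ballI closed_guarded)
  qed
  then have [measurable]: "E m n \<in> sets borel" for m n
    by (rule borel_closed)
  define Diff where "Diff = (\<Inter>m. \<Union>n. E m n)"
  have Diff_iff: "t \<in> Diff \<longleftrightarrow> (\<lambda>x. f x v) differentiable (at t)" for t
    unfolding Diff_def E_def q_def real_differentiable_at_iff_Cauchy by blast
  have [measurable]: "Diff \<in> sets borel"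
    unfolding Diff_def by measurable
  have "(\<lambda>j. indicator Diff t * q t (inverse (Suc j))) \<longlonglongrightarrow> partial1 f t v" for t
  proof (cases "t \<in> Diff")
    case True
    then have "((\<lambda>h. q t h) \<longlongrightarrow> deriv (\<lambda>x. f x v) t) (at 0)"
      unfolding Diff_iff q_def by (simp add: DERIV_deriv_iff_real_differentiable[symmetric] DERIV_def)
    moreover have "filterlim (\<lambda>j. inverse (real (Suc j))) (at 0) sequentially"
      using LIMSEQ_inverse_real_of_nat by (simp add: filterlim_at)
    ultimately have "(\<lambda>j. q t (inverse (Suc j))) \<longlonglongrightarrow> deriv (\<lambda>x. f x v) t"
      by (rule filterlim_compose)
    then show ?thesis
      using True Diff_iff by (simp add: partial1_def)
  qed (use Diff_iff in \<open>simp add: partial1_def\<close>)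
  moreover have "(\<lambda>t. indicator Diff t * q t (inverse (Suc j))) \<in> borel_measurable borel" for j
    using borel_measurable_continuous_onI[OF cont_q] by measurable
  ultimately show ?thesis
    by (rule borel_measurable_LIMSEQ_real)
qed

section \<open>An L1 estimate for integrals of a copula\<close>

lemma integrable_of_nn_integral_dist:
  fixes f g :: "'a \<Rightarrow> real"
  assumes f: "integrable M f" and g: "g \<in> borel_measurable M"
    and fin: "(\<integral>\<^sup>+x. ennreal \<bar>f x - g x\<bar> \<partial>M) < \<infinity>"
  shows "integrable M g"
proof (rule integrableI_bounded[OF g])
  have "(\<integral>\<^sup>+x. ennreal (norm (g x)) \<partial>M) \<le> (\<integral>\<^sup>+x. ennreal (norm (f x)) + ennreal \<bar>f x - g x\<bar> \<partial>M)"
    by (intro nn_integral_mono) (simp add: ennreal_plus[symmetric] del: ennreal_plus)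
  also have "\<dots> = (\<integral>\<^sup>+x. ennreal (norm (f x)) \<partial>M) + (\<integral>\<^sup>+x. ennreal \<bar>f x - g x\<bar> \<partial>M)"
    using borel_measurable_integrable[OF f] g by (intro nn_integral_add) auto
  also have "\<dots> < \<infinity>"
    using f fin by (simp add: integrable_iff_bounded)
  finally show "(\<integral>\<^sup>+x. ennreal (norm (g x)) \<partial>M) < \<infinity>" .
qed

lemma integrable_indicator_copula_comp:
  fixes C :: "('d::finite \<Rightarrow> real) \<Rightarrow> real" and a :: "'d \<Rightarrow> 'a \<Rightarrow> real"
  assumes C: "copula C" and a: "\<And>i. a i \<in> borel_measurable M" "\<And>i x. 0 \<le> a i x \<and> a i x \<le> 1"
    and S: "S \<in> sets M" and int: "\<And>i. integrable M (\<lambda>x. indicator S x * a i x)"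
  shows "integrable M (\<lambda>x. indicator S x * C (\<lambda>i. a i x))"
proof (rule Bochner_Integration.integrable_bound)
  show "integrable M (\<lambda>x. \<Sum>i\<in>UNIV. indicator S x * a i x)"
    by (intro Bochner_Integration.integrable_sum int)
  show "(\<lambda>x. indicator S x * C (\<lambda>i. a i x)) \<in> borel_measurable M"
    using borel_measurable_copula_comp[OF C a] S by measurable
  show "AE x in M. norm (indicator S x * C (\<lambda>i. a i x)) \<le> norm (\<Sum>i\<in>UNIV. indicator S x * a i x)"
    using copula_abs_le_sum[OF C] a(2) by (intro AE_I2) (auto simp: unit_cube_def indicator_def sum_nonneg)
qed

lemma abs_indicator_copula_diff_le:
  fixes C :: "('d::finite \<Rightarrow> real) \<Rightarrow> real"
  assumes C: "copula C" and u: "u \<in> unit_cube" and v: "v \<in> unit_cube" and ST: "S \<subseteq> T"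
  shows "\<bar>indicator S x * C u - indicator T x * C v\<bar> \<le> (\<Sum>i\<in>UNIV. \<bar>u i * indicator S x - v i\<bar> * indicator T x)"
proof (cases "x \<in> S")
  case True
  then show ?thesis
    using copula_lipschitz[OF C u v] ST by auto
next
  case False
  have "0 \<le> v i" for i
    using v by (simp add: unit_cube_def)
  then show ?thesis
    using False copula_abs_le_sum[OF C v] by (auto simp: indicator_def sum_nonneg)
qed

lemma abs_integral_copula_diff_le:
  fixes C :: "('d::finite \<Rightarrow> real) \<Rightarrow> real" and a b :: "'d \<Rightarrow> 'a \<Rightarrow> real"
  assumes C: "copula C"
    and a: "\<And>i. a i \<in> borel_measurable M" "\<And>i x. 0 \<le> a i x \<and> a i x \<le> 1"
    and b: "\<And>i. b i \<in> borel_measurable M" "\<And>i x. 0 \<le> b i x \<and> b i x \<le> 1"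
    and S: "S \<in> sets M" and T: "T \<in> sets M" and ST: "S \<subseteq> T"
    and int_a: "\<And>i. integrable M (\<lambda>x. indicator S x * a i x)"
    and int_b: "\<And>i. integrable M (\<lambda>x. indicator T x * b i x)"
  shows "ennreal \<bar>(\<integral>x. indicator S x * C (\<lambda>i. a i x) \<partial>M) - (\<integral>x. indicator T x * C (\<lambda>i. b i x) \<partial>M)\<bar>
    \<le> (\<Sum>i\<in>UNIV. \<integral>\<^sup>+x. ennreal (\<bar>a i x * indicator S x - b i x\<bar> * indicator T x) \<partial>M)"
    (is "ennreal \<bar>integral\<^sup>L M ?U - integral\<^sup>L M ?V\<bar> \<le> _")
proof -
  note [measurable] = S T a(1) b(1)
  have int_U: "integrable M ?U" and int_V: "integrable M ?V"
    by (rule integrable_indicator_copula_comp[OF C a S int_a] integrable_indicator_copula_comp[OF C b T int_b])+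
  have cube: "(\<lambda>i. a i x) \<in> unit_cube" "(\<lambda>i. b i x) \<in> unit_cube" for x
    using a(2) b(2) by (auto simp: unit_cube_def)
  have "ennreal \<bar>integral\<^sup>L M ?U - integral\<^sup>L M ?V\<bar> = ennreal (norm (\<integral>x. ?U x - ?V x \<partial>M))"
    using int_U int_V by simp
  also have "\<dots> \<le> (\<integral>\<^sup>+x. ennreal (norm (?U x - ?V x)) \<partial>M)"
    using int_U int_V by (intro integral_norm_bound_ennreal) auto
  also have "\<dots> \<le> (\<integral>\<^sup>+x. (\<Sum>i\<in>UNIV. ennreal (\<bar>a i x * indicator S x - b i x\<bar> * indicator T x)) \<partial>M)"
    using abs_indicator_copula_diff_le[OF C cube ST]
    by (intro nn_integral_mono) (simp add: sum_ennreal)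
  also have "\<dots> = (\<Sum>i\<in>UNIV. \<integral>\<^sup>+x. ennreal (\<bar>a i x * indicator S x - b i x\<bar> * indicator T x) \<partial>M)"
    by (intro nn_integral_sum) measurable
  finally show ?thesis .
qed

lemma tendsto_of_ennreal_dist_le:
  fixes f :: "'a \<Rightarrow> real"
  assumes "\<forall>\<^sub>F x in F. ennreal \<bar>f x - L\<bar> \<le> g x" and "(g \<longlongrightarrow> 0) F"
  shows "(f \<longlongrightarrow> L) F"
proof -
  have "((\<lambda>x. ennreal \<bar>f x - L\<bar>) \<longlongrightarrow> ennreal 0) F"
    using tendsto_sandwich[OF _ assms(1) tendsto_const assms(2)] by simp
  then have "((\<lambda>x. \<bar>f x - L\<bar>) \<longlongrightarrow> 0) F"
    by (subst (asm) tendsto_ennreal_iff) auto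
  then show ?thesis
    by (simp add: tendsto_rabs_zero_iff LIM_zero_iff)
qed

section \<open>Tail dependence of the generalized Markov product\<close>

lemma partial1_clamp01:
  assumes "0 < t" "t < 1"
  shows "partial1 (\<lambda>x. D (clamp01 x)) t v = partial1 D t v"
proof (rule partial1_cong_nhds)
  show "\<forall>\<^sub>F x in nhds t. D (clamp01 x) v = D x v"
    using eventually_nhds_in_open[of "{0<..<1}" t] assms
    by (auto simp: clamp01_id elim!: eventually_mono)
qed

lemma partial1_max0:
  assumes "0 < t"
  shows "partial1 (\<lambda>x. L (max 0 x)) t w = partial1 L t w"
proof (rule partial1_cong_nhds)
  show "\<forall>\<^sub>F x in nhds t. L (max 0 x) w = L x w"
    using eventually_nhds_in_open[of "{0<..}" t] assms by (auto elim!: eventually_mono)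
qed

lemma markov_prod_eq_integral_clamp01:
  "markov_prod C Cs v = (\<integral>t. indicator {0..1} t * C (\<lambda>i. partial1 (\<lambda>x. Cs i (clamp01 x)) t (v i)) \<partial>lborel)"
  unfolding markov_prod_def set_lebesgue_integral_def
  by (intro integral_discrete_difference[where X = "{0, 1}"]) (auto simp: indicator_def partial1_clamp01)

lemma markov_prod_tdf_eq_integral_max0:
  "markov_prod_tdf C Ls w = (\<integral>t. indicator {0..} t * C (\<lambda>i. partial1 (\<lambda>x. Ls i (max 0 x)) t (w i)) \<partial>lborel)"
  unfolding markov_prod_tdf_def set_lebesgue_integral_def
  by (intro integral_discrete_difference[where X = "{0}"]) (auto simp: indicator_def partial1_max0)

definition tail_deriv_dist :: "(real \<Rightarrow> real \<Rightarrow> real) \<Rightarrow> real \<Rightarrow> real \<Rightarrow> ennreal" where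
  "tail_deriv_dist D w s =
    (\<integral>\<^sup>+ t. ennreal \<bar>partial1 D (s * t) (s * w) * indicator {0..1/s} t - partial1 (tdf2 D) t w\<bar>
      * indicator {0..} t \<partial>lborel)"

lemma tail_deriv_dist_eq_clamped:
  assumes "0 < s"
  shows "tail_deriv_dist D w s =
    (\<integral>\<^sup>+ t. ennreal (\<bar>partial1 (\<lambda>x. D (clamp01 x)) (s * t) (s * w) * indicator {0..1/s} t
      - partial1 (\<lambda>x. tdf2 D (max 0 x)) t w\<bar> * indicator {0..} t) \<partial>lborel)"
  unfolding tail_deriv_dist_def
proof (rule nn_integral_cong_AE)
  have "AE t in lborel. t \<notin> {0, 1/s}"
    by (intro AE_discrete_difference) auto
  then show "AE t in lborel. ennreal \<bar>partial1 D (s * t) (s * w) * indicator {0..1/s} t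
      - partial1 (tdf2 D) t w\<bar> * indicator {0..} t
    = ennreal (\<bar>partial1 (\<lambda>x. D (clamp01 x)) (s * t) (s * w) * indicator {0..1/s} t
      - partial1 (\<lambda>x. tdf2 D (max 0 x)) t w\<bar> * indicator {0..} t)"
  proof eventually_elim
    case (elim t)
    have "s * t < 1" if "t < 1/s"
      using that assms by (simp add: less_divide_eq mult.commute)
    then show ?case
      using elim assms
      by (cases "0 < t"; cases "t < 1/s") (auto simp: indicator_def partial1_clamp01 partial1_max0)
  qed
qed

lemma partial1_copula2_clamp01_bounds:
  "copula2 D \<Longrightarrow> 0 \<le> v \<Longrightarrow> v \<le> 1 \<Longrightarrow>
    0 \<le> partial1 (\<lambda>x. D (clamp01 x)) t v \<and> partial1 (\<lambda>x. D (clamp01 x)) t v \<le> 1"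
  by (intro partial1_bounds copula2_clamp01_mono_lipschitz)

lemma borel_measurable_partial1_copula2_clamp01:
  assumes "copula2 D" "0 \<le> v" "v \<le> 1"
  shows "(\<lambda>t. partial1 (\<lambda>x. D (clamp01 x)) (s * t) v) \<in> borel_measurable borel"
proof -
  have "(\<lambda>t. partial1 (\<lambda>x. D (clamp01 x)) t v) \<in> borel_measurable borel"
    using lipschitz_on_continuous_on[OF copula2_clamp01_mono_lipschitz(2)[OF assms]]
    by (rule borel_measurable_partial1)
  then show ?thesis
    by (rule measurable_compose[rotated]) simp
qed

lemma integrable_partial1_copula2_clamp01:
  assumes "copula2 D" "0 \<le> v" "v \<le> 1" "0 < s"
  shows "integrable lborel (\<lambda>t. indicator {0..1/s} t * partial1 (\<lambda>x. D (clamp01 x)) (s * t) v)"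
proof -
  have "integrable lborel (\<lambda>t. indicator {0..1/s} t *\<^sub>R partial1 (\<lambda>x. D (clamp01 x)) (s * t) v)"
    using borel_measurable_partial1_copula2_clamp01[OF assms(1-3)]
      partial1_copula2_clamp01_bounds[OF assms(1-3)] assms(4)
    by (intro integrableI_bounded_set_indicator[where B = 1]) auto
  then show ?thesis
    by simp
qed

lemma partial1_tdf2_max0_bounds:
  "copula2 D \<Longrightarrow> has_tdf2 D \<Longrightarrow> 0 \<le> w \<Longrightarrow>
    0 \<le> partial1 (\<lambda>x. tdf2 D (max 0 x)) t w \<and> partial1 (\<lambda>x. tdf2 D (max 0 x)) t w \<le> 1"
  by (intro partial1_bounds tdf2_max0_mono_lipschitz)

lemma borel_measurable_partial1_tdf2_max0:
  assumes "copula2 D" "has_tdf2 D" "0 \<le> w"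
  shows "(\<lambda>t. partial1 (\<lambda>x. tdf2 D (max 0 x)) t w) \<in> borel_measurable borel"
  using lipschitz_on_continuous_on[OF tdf2_max0_mono_lipschitz(2)[OF assms]]
  by (rule borel_measurable_partial1)

lemma markov_prod_rescaled:
  assumes "0 < s"
  shows "markov_prod C Cs v / s =
    (\<integral>t. indicator {0..1/s} t * C (\<lambda>i. partial1 (\<lambda>x. Cs i (clamp01 x)) (s * t) (v i)) \<partial>lborel)"
proof -
  have "indicator {0..1} (s * t) = (indicator {0..1/s} t :: real)" for t
    using assms by (auto simp: indicator_def zero_le_mult_iff pos_le_divide_eq mult.commute)
  moreover have "markov_prod C Cs v = s * (\<integral>t. indicator {0..1} (s * t)
      * C (\<lambda>i. partial1 (\<lambda>x. Cs i (clamp01 x)) (s * t) (v i)) \<partial>lborel)"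
    unfolding markov_prod_eq_integral_clamp01
    by (subst lborel_integral_real_affine[where c = s and t = 0]) (use assms in auto)
  ultimately show ?thesis
    using assms by simp
qed

lemma integrable_partial1_tdf2_max0:
  assumes D: "copula2 D" "has_tdf2 D" and w: "0 \<le> w"
    and lim: "(tail_deriv_dist D w \<longlongrightarrow> 0) (at_right 0)"
  shows "integrable lborel (\<lambda>t. indicator {0..} t * partial1 (\<lambda>x. tdf2 D (max 0 x)) t w)"
proof -
  have "\<forall>\<^sub>F s in at_right 0. 0 < s \<and> s * w \<le> 1 \<and> tail_deriv_dist D w s < 1"
    using eventually_at_right_less[of 0] eventually_at_right_0_mult_le_1[of w] order_tendstoD(2)[OF lim zero_less_one]
    by eventually_elim auto
  then obtain s where s: "0 < s" "s * w \<le> 1" "tail_deriv_dist D w s < 1"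
    using eventually_happens'[OF trivial_limit_at_right_real] by blast
  define a where "a t = partial1 (\<lambda>x. D (clamp01 x)) (s * t) (s * w) * indicator {0..1/s} t" for t
  define b where "b t = indicator {0..} t * partial1 (\<lambda>x. tdf2 D (max 0 x)) t w" for t
  have "integrable lborel a"
    unfolding a_def using integrable_partial1_copula2_clamp01[OF D(1) _ s(2) s(1)] s w
    by (simp add: mult.commute)
  moreover have "b \<in> borel_measurable lborel"
    unfolding b_def using borel_measurable_partial1_tdf2_max0[OF D w] by simp
  moreover have "(\<integral>\<^sup>+t. ennreal \<bar>a t - b t\<bar> \<partial>lborel) = tail_deriv_dist D w s"
    unfolding tail_deriv_dist_eq_clamped[OF s(1)] a_def b_def
    by (intro nn_integral_cong) (auto simp: indicator_def)
  then have "(\<integral>\<^sup>+t. ennreal \<bar>a t - b t\<bar> \<partial>lborel) < \<infinity>"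
    using less_trans[OF s(3) ennreal_one_less_top] by simp
  ultimately have "integrable lborel b"
    by (rule integrable_of_nn_integral_dist)
  then show ?thesis
    unfolding b_def .
qed

lemma markov_prod_rescaled_dist_le:
  fixes C :: "('d::finite \<Rightarrow> real) \<Rightarrow> real"
  assumes C: "copula C" and Cs: "\<And>i. copula2 (Cs i)" "\<And>i. has_tdf2 (Cs i)"
    and w: "\<And>i. 0 \<le> w i" and s: "0 < s" "\<And>i. s * w i \<le> 1"
    and int: "\<And>i. integrable lborel (\<lambda>t. indicator {0..} t * partial1 (\<lambda>x. tdf2 (Cs i) (max 0 x)) t (w i))"
  shows "ennreal \<bar>markov_prod C Cs (\<lambda>i. s * w i) / s - markov_prod_tdf C (\<lambda>i. tdf2 (Cs i)) w\<bar>
    \<le> (\<Sum>i\<in>UNIV. tail_deriv_dist (Cs i) (w i) s)"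
proof -
  define a where "a i t = partial1 (\<lambda>x. Cs i (clamp01 x)) (s * t) (s * w i)" for i t
  define b where "b i t = partial1 (\<lambda>x. tdf2 (Cs i) (max 0 x)) t (w i)" for i t
  have sw: "0 \<le> s * w i" for i
    using s w by simp
  have "a i \<in> borel_measurable lborel" for i
    unfolding a_def measurable_lborel2 by (rule borel_measurable_partial1_copula2_clamp01[OF Cs(1) sw s(2)])
  moreover have "0 \<le> a i t \<and> a i t \<le> 1" for i t
    unfolding a_def by (rule partial1_copula2_clamp01_bounds[OF Cs(1) sw s(2)])
  moreover have "b i \<in> borel_measurable lborel" for i
    unfolding b_def using borel_measurable_partial1_tdf2_max0[OF Cs w] by simp
  moreover have "0 \<le> b i t \<and> b i t \<le> 1" for i t
    unfolding b_def by (rule partial1_tdf2_max0_bounds[OF Cs w])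
  moreover have "integrable lborel (\<lambda>t. indicator {0..1/s} t * a i t)" for i
    unfolding a_def by (rule integrable_partial1_copula2_clamp01[OF Cs(1) sw s(2,1)])
  ultimately have "ennreal \<bar>(\<integral>t. indicator {0..1/s} t * C (\<lambda>i. a i t) \<partial>lborel)
      - (\<integral>t. indicator {0..} t * C (\<lambda>i. b i t) \<partial>lborel)\<bar>
    \<le> (\<Sum>i\<in>UNIV. \<integral>\<^sup>+t. ennreal (\<bar>a i t * indicator {0..1/s} t - b i t\<bar> * indicator {0..} t) \<partial>lborel)"
    using int unfolding b_def
    by (intro abs_integral_copula_diff_le[OF C]) auto
  then show ?thesis
    using s(1) by (simp add: a_def b_def markov_prod_rescaled markov_prod_tdf_eq_integral_max0
        tail_deriv_dist_eq_clamped)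
qed

theorem mainTheorem3:
  fixes C :: "('d::finite \<Rightarrow> real) \<Rightarrow> real"
    and Cs :: "'d \<Rightarrow> real \<Rightarrow> real \<Rightarrow> real"
    and w :: "'d \<Rightarrow> real"
  assumes "copula C"
    and "\<And>i. copula2 (Cs i)"
    and "\<And>i. has_tdf2 (Cs i)"
    and "\<And>i w. w \<ge> 0 \<Longrightarrow>
           ((\<lambda>s. \<integral>\<^sup>+ t. ennreal \<bar>partial1 (Cs i) (s * t) (s * w) * indicator {0..1/s} t
                                 - partial1 (tdf2 (Cs i)) t w\<bar> * indicator {0..} t \<partial>lborel)
             \<longlongrightarrow> 0) (at_right 0)"
    and "\<And>i. w i \<ge> 0"
  shows "((\<lambda>s. markov_prod C Cs (\<lambda>i. s * w i) / s)
           \<longlongrightarrow> markov_prod_tdf C (\<lambda>i. tdf2 (Cs i)) w) (at_right 0)"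
proof (rule tendsto_of_ennreal_dist_le)
  have lim: "(tail_deriv_dist (Cs i) (w i) \<longlongrightarrow> 0) (at_right 0)" for i
    using assms(4)[OF assms(5)] unfolding tail_deriv_dist_def .
  then show "((\<lambda>s. \<Sum>i\<in>UNIV. tail_deriv_dist (Cs i) (w i) s) \<longlongrightarrow> 0) (at_right 0)"
    using tendsto_sum[of UNIV "\<lambda>i. tail_deriv_dist (Cs i) (w i)" "\<lambda>_. 0"] by simp
  have "\<forall>\<^sub>F s in at_right 0. \<forall>i. s * w i \<le> 1"
    by (intro eventually_all_finite eventually_at_right_0_mult_le_1)
  with eventually_at_right_less[of 0]
  show "\<forall>\<^sub>F s in at_right 0. ennreal \<bar>markov_prod C Cs (\<lambda>i. s * w i) / s - markov_prod_tdf C (\<lambda>i. tdf2 (Cs i)) w\<bar>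
      \<le> (\<Sum>i\<in>UNIV. tail_deriv_dist (Cs i) (w i) s)"
    by eventually_elim
      (intro markov_prod_rescaled_dist_le integrable_partial1_tdf2_max0 assms lim; simp)
qed

end
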